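(* Let $\mathcal{C}$ be a binary linear code with minimum distance $d(\mathcal{C}) \le 3$. Then every parity-check matrix $H$ for $\mathcal{C}$ satisfies $s(H) = d(\mathcal{C})$, and therefore $\rho(\mathcal{C}) = r(\mathcal{C})$.
   Context: A parity-check matrix for a linear code $\mathcal{C}$ is any matrix (possibly with linearly dependent rows) whose rows span the dual code $\mathcal{C}^\perp$. $d(\mathcal{C})$ is the minimum Hamming distance. For a parity-check matrix $H$, the stopping distance $s(H)$ is the largest integer such that for every set of $s(H)-1$ or fewer columns of $H$, the projection of $H$ onto those columns contains at least one row of Hamming weight exactly one. The redundancy $r(\mathcal{C})$ is the minimum number of rows of a parity-check matrix for $\mathcal{C}$ (i.e. $n-\dim\mathcal{C}$). The stopping redundancy $\rho(\mathcal{C})$ is the smallest number of rows of a parity-check matrix $H$ for $\mathcal{C}$ with $s(H) = d(\mathcal{C})$. *)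

theory Defs
  imports Main
begin

text \<open>Binary vectors of length n are modelled as functions from a finite index
type 'n (the coordinate/column set, n = CARD('n)) to bool; True means 1 in GF(2).\<close>

type_synonym 'n bvec = "'n \<Rightarrow> bool"

definition bzero :: "'n bvec" where
  "bzero = (\<lambda>i. False)"

definition badd :: "'n bvec \<Rightarrow> 'n bvec \<Rightarrow> 'n bvec" where
  "badd x y = (\<lambda>i. x i \<noteq> y i)"

definition weight :: "('n::finite) bvec \<Rightarrow> nat" where
  "weight x = card {i. x i}"

definition bsum :: "'n bvec set \<Rightarrow> 'n bvec" where
  "bsum T = (\<lambda>i. odd (card {v \<in> T. v i}))"

definition row_span :: "'n bvec list \<Rightarrow> 'n bvec set" where
  "row_span H = {bsum T | T. T \<subseteq> set H}"

definition binary_linear_code :: "('n::finite) bvec set \<Rightarrow> bool" where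
  "binary_linear_code C \<longleftrightarrow> bzero \<in> C \<and> (\<forall>x\<in>C. \<forall>y\<in>C. badd x y \<in> C)"

definition dual_code :: "('n::finite) bvec set \<Rightarrow> 'n bvec set" where
  "dual_code C = {y. \<forall>x\<in>C. even (card {i. x i \<and> y i})}"

text \<open>Minimum Hamming distance = minimum weight of a nonzero codeword.\<close>
definition min_dist :: "('n::finite) bvec set \<Rightarrow> nat" where
  "min_dist C = Min {weight x | x. x \<in> C \<and> x \<noteq> bzero}"

text \<open>H (list of rows, possibly dependent) is a parity-check matrix for C.\<close>
definition parity_check_matrix :: "('n::finite) bvec set \<Rightarrow> 'n bvec list \<Rightarrow> bool" where
  "parity_check_matrix C H \<longleftrightarrow> row_span H = dual_code C"

definition stopping_distance :: "('n::finite) bvec list \<Rightarrow> nat" where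
  "stopping_distance H = (GREATEST s. \<forall>S::'n set. S \<noteq> {} \<and> card S + 1 \<le> s \<longrightarrow>
      (\<exists>h \<in> set H. card {i \<in> S. h i} = 1))"

definition redundancy :: "('n::finite) bvec set \<Rightarrow> nat" where
  "redundancy C = (LEAST m. \<exists>H. parity_check_matrix C H \<and> length H = m)"

definition stopping_redundancy :: "('n::finite) bvec set \<Rightarrow> nat" where
  "stopping_redundancy C = (LEAST m. \<exists>H. parity_check_matrix C H \<and> length H = m
      \<and> stopping_distance H = min_dist C)"

end

theory Submission
  imports Defs
begin

text \<open>A stopping set of \<open>H\<close> is a nonempty set of columns on which no row of \<open>H\<close> has
weight one, and \<open>s(H)\<close> is the least size of a stopping set. Every row of \<open>H\<close> lies in the
dual code, so it meets the support of each codeword in an even number of positions; hence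
supports of nonzero codewords are stopping sets and \<open>s(H) \<le> d\<close>. Conversely, a stopping set
\<open>S\<close> with \<open>|S| \<le> 2\<close> meets every row in 0 or 2 positions, so its indicator vector is
orthogonal to the row space, which is the dual code; by \<open>C\<^sup>\<bottom>\<^sup>\<bottom> = C\<close> it is a codeword of
weight \<open>|S|\<close>. So for \<open>d \<le> 3\<close> no stopping set is smaller than \<open>d\<close>. The identity
\<open>C\<^sup>\<bottom>\<^sup>\<bottom> = C\<close> over GF(2) is proved by eliminating one coordinate at a time, using a codeword
that is nonzero there as pivot.\<close>

definition bdot :: "('n::finite) bvec \<Rightarrow> 'n bvec \<Rightarrow> bool" where
  "bdot x y \<longleftrightarrow> odd (card {i. x i \<and> y i})"

definition bunit :: "'n \<Rightarrow> 'n bvec" where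
  "bunit a = (\<lambda>i. i = a)"

lemma odd_card_sym_diff:
  assumes "finite A" "finite B"
  shows "odd (card (sym_diff A B)) \<longleftrightarrow> odd (card A) \<noteq> odd (card B)"
proof -
  have "card A = card (A - B) + card (A \<inter> B)"
    using card_Int_Diff[OF assms(1), of B] by simp
  moreover have "card B = card (B - A) + card (A \<inter> B)"
    using card_Int_Diff[OF assms(2), of A] by (simp add: Int_commute)
  moreover have "card (sym_diff A B) = card (A - B) + card (B - A)"
    using assms by (intro card_Un_disjoint) auto
  ultimately show ?thesis by auto
qed

lemma bdot_commute: "bdot x y = bdot y x"
  unfolding bdot_def by (simp add: conj_commute)

lemma bdot_badd_left: "bdot (badd x z) y \<longleftrightarrow> bdot x y \<noteq> bdot z y"
proof -
  let ?X = "{i. x i \<and> y i}" and ?Z = "{i. z i \<and> y i}"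
  have "{i. badd x z i \<and> y i} = sym_diff ?X ?Z"
    unfolding badd_def by auto
  then show ?thesis
    unfolding bdot_def using odd_card_sym_diff[of ?X ?Z] by simp
qed

lemma bdot_badd_right: "bdot y (badd x z) \<longleftrightarrow> bdot y x \<noteq> bdot y z"
  by (simp add: bdot_commute[of y] bdot_badd_left)

lemma bdot_bunit_right: "bdot x (bunit a) = x a"
proof -
  have "{i. x i \<and> bunit a i} = (if x a then {a} else {})"
    unfolding bunit_def by auto
  then show ?thesis
    unfolding bdot_def by simp
qed

lemma mem_dual_code_iff: "y \<in> dual_code C \<longleftrightarrow> (\<forall>x\<in>C. \<not> bdot x y)"
  unfolding dual_code_def bdot_def by simp

lemma bsum_insert:
  fixes t :: "('n::finite) bvec"
  assumes "t \<notin> T"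
  shows "bsum (insert t T) = badd t (bsum T)"
proof -
  have "card {v \<in> insert t T. v i} = (if t i then Suc else id) (card {v \<in> T. v i})" for i
  proof -
    have "{v \<in> insert t T. v i} = (if t i then insert t {v \<in> T. v i} else {v \<in> T. v i})"
      by auto
    then show ?thesis
      using assms by simp
  qed
  then show ?thesis
    unfolding bsum_def badd_def by (auto simp: fun_eq_iff)
qed

lemma bdot_bsum_left: "bdot (bsum T) y \<longleftrightarrow> odd (card {t \<in> T. bdot t y})"
proof (induction T rule: finite_induct[OF finite])
  case 1
  then show ?case
    unfolding bsum_def bdot_def by simp
next
  case (2 t T)
  have "{u \<in> insert t T. bdot u y} = (if bdot t y then insert t {u \<in> T. bdot u y} else {u \<in> T. bdot u y})"
    by auto
  then show ?case
    using 2 by (simp add: bsum_insert bdot_badd_left)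
qed

lemma set_subset_row_span: "set H \<subseteq> row_span (H :: ('n::finite) bvec list)"
proof
  fix h assume "h \<in> set H"
  then have "bsum {h} \<in> row_span H"
    unfolding row_span_def by blast
  moreover have "bsum {h} = h"
  proof
    fix i
    have "{v \<in> {h}. v i} = (if h i then {h} else {})"
      by auto
    then show "bsum {h} i = h i"
      unfolding bsum_def by simp
  qed
  ultimately show "h \<in> row_span H"
    by simp
qed

lemma dual_code_row_span: "dual_code (row_span H) = dual_code (set H)"
proof
  show "dual_code (row_span H) \<subseteq> dual_code (set H)"
    using set_subset_row_span[of H] unfolding dual_code_def by blast
next
  show "dual_code (set H) \<subseteq> dual_code (row_span H)"
  proof
    fix y assume y: "y \<in> dual_code (set H)"
    have "\<not> bdot (bsum T) y" if "T \<subseteq> set H" for T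
    proof -
      have "{t \<in> T. bdot t y} = {}"
        using y that by (auto simp: mem_dual_code_iff)
      then show ?thesis
        by (metis bdot_bsum_left card.empty even_zero)
    qed
    then show "y \<in> dual_code (row_span H)"
      unfolding row_span_def mem_dual_code_iff by blast
  qed
qed

subsection \<open>The double dual of a binary linear code\<close>

definition pivot_reduce :: "'n bvec \<Rightarrow> 'n \<Rightarrow> 'n bvec \<Rightarrow> 'n bvec" where
  "pivot_reduce p a c = (if c a then badd c p else c)"

lemma pivot_reduce_at: "p a \<Longrightarrow> \<not> pivot_reduce p a c a"
  unfolding pivot_reduce_def badd_def by simp

lemma pivot_reduce_support:
  "p a \<Longrightarrow> {i. pivot_reduce p a c i} \<subseteq> ({i. c i} \<union> {i. p i}) - {a}"
  unfolding pivot_reduce_def badd_def by auto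

lemma pivot_reduce_in_code_iff:
  assumes "binary_linear_code C" "p \<in> C"
  shows "pivot_reduce p a c \<in> C \<longleftrightarrow> c \<in> C"
proof -
  have "badd (badd c p) p = c"
    unfolding badd_def by auto
  then show ?thesis
    using assms unfolding pivot_reduce_def binary_linear_code_def by metis
qed

lemma bdot_pivot_reduce: "\<not> bdot p y \<Longrightarrow> bdot (pivot_reduce p a c) y = bdot c y"
  unfolding pivot_reduce_def by (simp add: bdot_badd_left)

lemma pivot_correction:
  fixes y :: "('n::finite) bvec"
  assumes "p a"
  obtains y' where "\<not> bdot p y'" and "\<And>c. \<not> c a \<Longrightarrow> bdot c y' = bdot c y"
proof
  let ?y' = "if bdot p y then badd y (bunit a) else y"
  show "\<not> bdot p ?y'"
    using assms by (simp add: bdot_badd_right bdot_bunit_right)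
  show "bdot c ?y' = bdot c y" if "\<not> c a" for c
    using that by (simp add: bdot_badd_right bdot_bunit_right)
qed

lemma binary_linear_code_vanishing_at:
  "binary_linear_code C \<Longrightarrow> binary_linear_code {c \<in> C. \<not> c a}"
  unfolding binary_linear_code_def bzero_def badd_def by auto

text \<open>Induction on a set \<open>F\<close> of coordinates containing all supports. To remove a coordinate
\<open>a\<close>, a codeword \<open>p\<close> with \<open>p a\<close> serves as pivot: adding \<open>p\<close> clears coordinate \<open>a\<close> without
changing membership in \<open>C\<close>, so the induction hypothesis applies to the subcode vanishing at
\<open>a\<close>, and the separating vector it yields is then corrected at \<open>a\<close> to be orthogonal to \<open>p\<close>.\<close>

lemma separating_vector_on_support:
  fixes C :: "('n::finite) bvec set"
  assumes "finite F" "binary_linear_code C" "\<forall>c\<in>C. {i. c i} \<subseteq> F" "{i. v i} \<subseteq> F" "v \<notin> C"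
  shows "\<exists>y. (\<forall>c\<in>C. \<not> bdot c y) \<and> bdot v y"
  using assms
proof (induction F arbitrary: C v rule: finite_induct)
  case empty
  then have "v = bzero"
    unfolding bzero_def by auto
  with empty.prems(1,4) show ?case
    unfolding binary_linear_code_def by blast
next
  case (insert a F)
  show ?case
  proof (cases "\<exists>p\<in>C. p a")
    case no_pivot: False
    show ?thesis
    proof (cases "v a")
      case True
      then show ?thesis
        using no_pivot by (intro exI[of _ "bunit a"]) (auto simp: bdot_bunit_right)
    next
      case False
      have "\<forall>c\<in>C. {i. c i} \<subseteq> F"
        using insert.prems(2) no_pivot by blast
      moreover have "{i. v i} \<subseteq> F"
        using insert.prems(3) False by blast
      ultimately show ?thesis
        using insert.IH insert.prems(1,4) by blast
    qed
  next
    case True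
    then obtain p where p: "p \<in> C" "p a" by blast
    let ?C' = "{c \<in> C. \<not> c a}" and ?v' = "pivot_reduce p a v"
    have "\<exists>y. (\<forall>c\<in>?C'. \<not> bdot c y) \<and> bdot ?v' y"
    proof (rule insert.IH)
      show "binary_linear_code ?C'"
        using insert.prems(1) by (rule binary_linear_code_vanishing_at)
      show "\<forall>c\<in>?C'. {i. c i} \<subseteq> F"
        using insert.prems(2) by blast
      show "{i. ?v' i} \<subseteq> F"
        using pivot_reduce_support[of p a v, OF p(2)] insert.prems(2,3) p(1) by blast
      show "?v' \<notin> ?C'"
        using pivot_reduce_in_code_iff[OF insert.prems(1) p(1)] insert.prems(4) by blast
    qed
    then obtain y where y: "\<forall>c\<in>?C'. \<not> bdot c y" "bdot ?v' y" by blast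
    obtain y' where y': "\<not> bdot p y'" "\<And>c. \<not> c a \<Longrightarrow> bdot c y' = bdot c y"
      using pivot_correction[of p a y, OF p(2)] by blast
    have reduce: "bdot c y' = bdot (pivot_reduce p a c) y" for c
      using bdot_pivot_reduce[OF y'(1), of a c] y'(2)[of "pivot_reduce p a c"]
        pivot_reduce_at[of p a c, OF p(2)] by simp
    have "pivot_reduce p a c \<in> ?C'" if "c \<in> C" for c
      using that pivot_reduce_in_code_iff[OF insert.prems(1) p(1)] pivot_reduce_at[of p a, OF p(2)]
      by blast
    then have "\<forall>c\<in>C. \<not> bdot c y'"
      using y(1) reduce by blast
    moreover have "bdot v y'"
      using y(2) reduce by simp
    ultimately show ?thesis
      by blast
  qed
qed

lemma dual_dual_code:
  fixes C :: "('n::finite) bvec set"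
  assumes "binary_linear_code C"
  shows "dual_code (dual_code C) = C"
proof
  show "C \<subseteq> dual_code (dual_code C)"
  proof
    fix c assume "c \<in> C"
    then have "\<not> bdot y c" if "y \<in> dual_code C" for y
      using that bdot_commute[of y c] by (simp add: mem_dual_code_iff)
    then show "c \<in> dual_code (dual_code C)"
      by (simp add: mem_dual_code_iff)
  qed
next
  show "dual_code (dual_code C) \<subseteq> C"
  proof
    fix v assume v: "v \<in> dual_code (dual_code C)"
    show "v \<in> C"
    proof (rule ccontr)
      assume "v \<notin> C"
      then obtain y where "\<forall>c\<in>C. \<not> bdot c y" "bdot v y"
        using separating_vector_on_support[of UNIV C v] assms by auto
      then have "y \<in> dual_code C"
        by (simp add: mem_dual_code_iff)
      with v \<open>bdot v y\<close> show False
        using bdot_commute[of y v] by (simp add: mem_dual_code_iff)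
    qed
  qed
qed

lemma parity_check_dual_rows:
  assumes "binary_linear_code C" "parity_check_matrix C H"
  shows "dual_code (set H) = C"
proof -
  have "dual_code (set H) = dual_code (dual_code C)"
    using assms(2) dual_code_row_span[of H] unfolding parity_check_matrix_def by simp
  also have "\<dots> = C"
    using assms(1) by (rule dual_dual_code)
  finally show ?thesis .
qed

subsection \<open>Stopping sets\<close>

definition stopping_set :: "('n::finite) bvec list \<Rightarrow> 'n set \<Rightarrow> bool" where
  "stopping_set H S \<longleftrightarrow> S \<noteq> {} \<and> (\<forall>h\<in>set H. card {i \<in> S. h i} \<noteq> 1)"

lemma stopping_distance_eq_Min:
  fixes H :: "('n::finite) bvec list"
  assumes "\<exists>S. stopping_set H S"
  shows "stopping_distance H = Min (card ` Collect (stopping_set H))"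
proof -
  let ?m = "Min (card ` Collect (stopping_set H))"
  have "(\<forall>S::'n set. S \<noteq> {} \<and> card S + 1 \<le> s \<longrightarrow> (\<exists>h \<in> set H. card {i \<in> S. h i} = 1))
        \<longleftrightarrow> (\<forall>S. stopping_set H S \<longrightarrow> s \<le> card S)" for s
    unfolding stopping_set_def by (auto simp: not_less_eq_eq)
  also have "\<dots> s \<longleftrightarrow> s \<le> ?m" for s
    using assms by simp
  finally show ?thesis
    unfolding stopping_distance_def by (simp add: Greatest_equality)
qed

lemma min_dist_le_weight:
  "x \<in> C \<Longrightarrow> x \<noteq> bzero \<Longrightarrow> min_dist C \<le> weight x"
  unfolding min_dist_def by (intro Min_le) auto

lemma min_dist_attained:
  assumes "binary_linear_code C" "C \<noteq> {bzero}"
  obtains x where "x \<in> C" "x \<noteq> bzero" "weight x = min_dist C"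
proof -
  have "bzero \<in> C"
    using assms(1) unfolding binary_linear_code_def by blast
  then have "{weight x | x. x \<in> C \<and> x \<noteq> bzero} \<noteq> {}"
    using assms(2) by auto
  from Min_in[OF _ this] that show ?thesis
    unfolding min_dist_def by auto
qed

lemma support_stopping_set:
  assumes "parity_check_matrix C H" "x \<in> C" "x \<noteq> bzero"
  shows "stopping_set H {i. x i}"
proof -
  have "\<not> bdot x h" if "h \<in> set H" for h
    using assms(1,2) that set_subset_row_span[of H]
    unfolding parity_check_matrix_def by (auto simp: mem_dual_code_iff)
  moreover have "{i \<in> {i. x i}. h i} = {i. x i \<and> h i}" for h
    by simp
  moreover have "{i. x i} \<noteq> {}"
    using assms(3) unfolding bzero_def by auto
  ultimately show ?thesis
    unfolding stopping_set_def bdot_def by (metis odd_one)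
qed

lemma small_stopping_set_in_code:
  assumes "binary_linear_code C" "parity_check_matrix C H"
    and "stopping_set H S" "card S \<le> 2"
  shows "(\<lambda>i. i \<in> S) \<in> C"
proof -
  have "\<not> bdot h (\<lambda>i. i \<in> S)" if "h \<in> set H" for h
  proof -
    have "card {i \<in> S. h i} \<le> 2"
      using assms(4) card_mono[of S "{i \<in> S. h i}"] by auto
    moreover have "card {i \<in> S. h i} \<noteq> 1"
      using assms(3) that unfolding stopping_set_def by blast
    ultimately have "even (card {i \<in> S. h i})"
      by presburger
    moreover have "{i. h i \<and> i \<in> S} = {i \<in> S. h i}"
      by auto
    ultimately show ?thesis
      unfolding bdot_def by simp
  qed
  then show ?thesis
    using parity_check_dual_rows[OF assms(1,2)] by (auto simp: mem_dual_code_iff)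
qed

lemma stopping_distance_eq_min_dist:
  fixes C :: "('n::finite) bvec set"
  assumes "binary_linear_code C" "C \<noteq> {bzero}" "min_dist C \<le> 3"
    and "parity_check_matrix C H"
  shows "stopping_distance H = min_dist C"
proof -
  obtain x where x: "x \<in> C" "x \<noteq> bzero" "weight x = min_dist C"
    using min_dist_attained[OF assms(1,2)] .
  have support_stop: "stopping_set H {i. x i}"
    using support_stopping_set[OF assms(4) x(1,2)] .
  have "min_dist C \<le> card S" if "stopping_set H S" for S
  proof (rule ccontr)
    assume small: "\<not> min_dist C \<le> card S"
    then have "(\<lambda>i. i \<in> S) \<in> C"
      using small_stopping_set_in_code[OF assms(1,4) that] assms(3) by simp
    moreover have "(\<lambda>i. i \<in> S) \<noteq> bzero"
      using that unfolding stopping_set_def bzero_def by (auto simp: fun_eq_iff)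
    moreover have "weight (\<lambda>i. i \<in> S) = card S"
      by (simp add: weight_def)
    ultimately show False
      using min_dist_le_weight small by metis
  qed
  moreover have "min_dist C \<in> card ` Collect (stopping_set H)"
    using support_stop x(3) unfolding weight_def by (metis image_eqI mem_Collect_eq)
  ultimately have "Min (card ` Collect (stopping_set H)) = min_dist C"
    by (intro Min_eqI) auto
  moreover have "\<exists>S. stopping_set H S"
    using support_stop ..
  ultimately show ?thesis
    using stopping_distance_eq_Min[of H] by argo
qed

theorem theorem3:
  fixes C :: "('n::finite) bvec set"
  assumes "binary_linear_code C"
    and "C \<noteq> {bzero}"
    and "min_dist C \<le> 3"
  shows "(\<forall>H. parity_check_matrix C H \<longrightarrow> stopping_distance H = min_dist C)
         \<and> stopping_redundancy C = redundancy C"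
proof
  show "\<forall>H. parity_check_matrix C H \<longrightarrow> stopping_distance H = min_dist C"
    using stopping_distance_eq_min_dist assms by blast
  then have "(\<exists>H. parity_check_matrix C H \<and> length H = m \<and> stopping_distance H = min_dist C)
      \<longleftrightarrow> (\<exists>H. parity_check_matrix C H \<and> length H = m)" for m
    by blast
  then show "stopping_redundancy C = redundancy C"
    unfolding stopping_redundancy_def redundancy_def by simp
qed

end
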